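(* Let $T$ be a tree, let $G$ be the graph obtained from $T$ by adding a new vertex $w$ adjacent to all vertices of $T$, and let $b\ge1$. If $\mathrm{bw}(T)\le b$, then $G$ is outer $(5b-5)$-planar.
   Context: For a linear order $\sigma\colon V(T)\to[n]$, the stretch of an edge $\{u,v\}$ is $|\sigma(u)-\sigma(v)|$; the bandwidth $\mathrm{bw}(T)$ is the minimum over all $\sigma$ of the maximum stretch of an edge. A circular drawing is a cyclic order $(v_1,\dots,v_n)$ of the vertices; edges $\{v_i,v_j\}$ ($i<j$) and $\{v_{i'},v_{j'}\}$ ($i'<j'$) cross if $i<i'<j<j'$ or $i'<i<j'<j$; a graph is outer $k$-planar if it has a circular drawing in which every edge crosses at most $k$ edges. *)

theory Defs
  imports Main
begin

definition simple_graph :: "'a set \<Rightarrow> 'a set set \<Rightarrow> bool" where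
  "simple_graph V E \<longleftrightarrow> finite V \<and> (\<forall>e\<in>E. \<exists>u v. e = {u, v} \<and> u \<in> V \<and> v \<in> V \<and> u \<noteq> v)"

definition is_walk :: "'a set set \<Rightarrow> 'a list \<Rightarrow> bool" where
  "is_walk E xs \<longleftrightarrow> xs \<noteq> [] \<and> (\<forall>i. Suc i < length xs \<longrightarrow> {xs ! i, xs ! Suc i} \<in> E)"

definition connected_graph :: "'a set \<Rightarrow> 'a set set \<Rightarrow> bool" where
  "connected_graph V E \<longleftrightarrow>
     (\<forall>u\<in>V. \<forall>v\<in>V. \<exists>xs. is_walk E xs \<and> hd xs = u \<and> last xs = v)"

definition is_cycle :: "'a set set \<Rightarrow> 'a list \<Rightarrow> bool" where
  "is_cycle E xs \<longleftrightarrow> length xs \<ge> 3 \<and> distinct xs \<and> is_walk E xs \<and> {last xs, hd xs} \<in> E"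

definition is_tree :: "'a set \<Rightarrow> 'a set set \<Rightarrow> bool" where
  "is_tree V E \<longleftrightarrow> simple_graph V E \<and> V \<noteq> {} \<and> connected_graph V E \<and> \<not> (\<exists>xs. is_cycle E xs)"

definition linear_layout :: "'a set \<Rightarrow> ('a \<Rightarrow> nat) \<Rightarrow> bool" where
  "linear_layout V \<sigma> \<longleftrightarrow> bij_betw \<sigma> V {1..card V}"

definition max_stretch_le :: "'a set set \<Rightarrow> ('a \<Rightarrow> nat) \<Rightarrow> nat \<Rightarrow> bool" where
  "max_stretch_le E \<sigma> k \<longleftrightarrow> (\<forall>u v. {u, v} \<in> E \<longrightarrow> nat \<bar>int (\<sigma> u) - int (\<sigma> v)\<bar> \<le> k)"

definition bandwidth :: "'a set \<Rightarrow> 'a set set \<Rightarrow> nat" where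
  "bandwidth V E = (LEAST k. \<exists>\<sigma>. linear_layout V \<sigma> \<and> max_stretch_le E \<sigma> k)"

text \<open>Circular drawings: a cyclic order (v_1,...,v_n), encoded by the position map
  \<pi> : V \<rightarrow> {1..n} (\<pi> v_i = i).\<close>
definition circular_drawing :: "'a set \<Rightarrow> ('a \<Rightarrow> nat) \<Rightarrow> bool" where
  "circular_drawing V \<pi> \<longleftrightarrow> bij_betw \<pi> V {1..card V}"

definition edges_cross :: "('a \<Rightarrow> nat) \<Rightarrow> 'a set \<Rightarrow> 'a set \<Rightarrow> bool" where
  "edges_cross \<pi> e f \<longleftrightarrow>
     (\<exists>a b c d. e = {a, b} \<and> f = {c, d} \<and> \<pi> a < \<pi> b \<and> \<pi> c < \<pi> d \<and>
        ((\<pi> a < \<pi> c \<and> \<pi> c < \<pi> b \<and> \<pi> b < \<pi> d) \<or> (\<pi> c < \<pi> a \<and> \<pi> a < \<pi> d \<and> \<pi> d < \<pi> b)))"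

definition outer_k_planar :: "nat \<Rightarrow> 'a set \<Rightarrow> 'a set set \<Rightarrow> bool" where
  "outer_k_planar k V E \<longleftrightarrow>
     (\<exists>\<pi>. circular_drawing V \<pi> \<and> (\<forall>e\<in>E. card {f\<in>E. edges_cross \<pi> e f} \<le> k))"

definition apex_edges :: "'a \<Rightarrow> 'a set \<Rightarrow> 'a set set \<Rightarrow> 'a set set" where
  "apex_edges w V E = E \<union> {{w, v} | v. v \<in> V}"

end

theory Submission
  imports Defs
begin

text \<open>Draw \<open>w\<close> first and then the vertices of \<open>T\<close> in the order of a layout \<open>\<sigma>\<close> of
  bandwidth at most \<open>b\<close>. A tree edge crossing an apex edge \<open>wv\<close> jumps over \<open>v\<close>, so both
  of its ends lie among the \<open>2b - 2\<close> vertices at distance less than \<open>b\<close> from \<open>v\<close>.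
  An edge crossing a tree edge \<open>xy\<close> is either an apex edge to one of the at most \<open>b - 1\<close>
  vertices strictly between \<open>x\<close> and \<open>y\<close>, or a tree edge with both ends among the at most
  \<open>3b - 3\<close> vertices other than \<open>x, y\<close> at distance less than \<open>b\<close> from the segment
  \<open>[\<sigma> x, \<sigma> y]\<close>. A forest has at most as many edges as vertices, so every edge is
  crossed at most \<open>4b - 4 \<le> 5b - 5\<close> times.\<close>

lemma simple_graph_edgeD:
  assumes "simple_graph V E" "{c, d} \<in> E"
  shows "c \<in> V" "d \<in> V" "c \<noteq> d"
  using assms unfolding simple_graph_def by (auto simp: doubleton_eq_iff)

lemma simple_graph_edgeE:
  assumes "simple_graph V E" "e \<in> E"
  obtains c d where "e = {c, d}" "c \<in> V" "d \<in> V" "c \<noteq> d"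
  using assms unfolding simple_graph_def by blast

lemma is_walk_mono: "is_walk F p \<Longrightarrow> F \<subseteq> E \<Longrightarrow> is_walk E p"
  unfolding is_walk_def by blast

lemma is_cycle_mono: "is_cycle F p \<Longrightarrow> F \<subseteq> E \<Longrightarrow> is_cycle E p"
  unfolding is_cycle_def using is_walk_mono by blast

lemma is_walk_snoc:
  assumes "is_walk F p" "{last p, x} \<in> F"
  shows "is_walk F (p @ [x])"
  unfolding is_walk_def
proof (intro conjI allI impI)
  fix i assume i: "Suc i < length (p @ [x])"
  have "p \<noteq> []" using assms(1) by (simp add: is_walk_def)
  show "{(p @ [x]) ! i, (p @ [x]) ! Suc i} \<in> F"
  proof (cases "Suc i < length p")
    case True
    then show ?thesis using assms(1) by (simp add: is_walk_def nth_append)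
  next
    case False
    with i have "i = length p - 1" by simp
    then show ?thesis using assms(2) \<open>p \<noteq> []\<close> by (simp add: nth_append last_conv_nth)
  qed
qed simp

lemma is_walk_drop:
  assumes "is_walk F p" "j < length p"
  shows "is_walk F (drop j p)"
  using assms unfolding is_walk_def by (auto simp: add.commute[of j])

lemma is_cycle_drop:
  assumes "distinct p" "is_walk F p" "j + 3 \<le> length p" "{last p, p ! j} \<in> F"
  shows "is_cycle F (drop j p)"
  using assms is_walk_drop[OF assms(2)]
  by (simp add: is_cycle_def hd_drop_conv_nth)

lemma ex_maximal_path:
  assumes "finite S" "s \<in> S"
  obtains p where "distinct p" "set p \<subseteq> S" "is_walk F p"
    "\<And>x. x \<in> S \<Longrightarrow> {last p, x} \<in> F \<Longrightarrow> x \<in> set p"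
proof -
  define path where "path p \<longleftrightarrow> distinct p \<and> set p \<subseteq> S \<and> is_walk F p" for p
  have "path [s]" using assms(2) by (simp add: path_def is_walk_def)
  moreover have "length p < Suc (card S)" if "path p" for p
  proof -
    have "length p = card (set p)" using that by (simp add: path_def distinct_card)
    also have "\<dots> \<le> card S" using that card_mono[OF assms(1)] by (simp add: path_def)
    finally show ?thesis by simp
  qed
  ultimately obtain p where p: "path p" and longest: "\<And>q. path q \<Longrightarrow> length q \<le> length p"
    using ex_has_greatest_nat[of path "[s]" length "Suc (card S)"] by blast
  have "x \<in> set p" if "x \<in> S" "{last p, x} \<in> F" for x
  proof (rule ccontr)
    assume "x \<notin> set p"
    then have "path (p @ [x])" using p that by (simp add: path_def is_walk_snoc)
    then show False using longest[of "p @ [x]"] by simp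
  qed
  with p that show ?thesis unfolding path_def by blast
qed

lemma simple_graph_edge_otherE:
  assumes "simple_graph S F" "f \<in> F" "u \<in> f"
  obtains x where "f = {u, x}"
  using assms by (auto elim!: simple_graph_edgeE simp: insert_commute)

lemma ex_neighbour_avoiding:
  assumes "simple_graph S F" "2 \<le> card {f \<in> F. u \<in> f}"
  obtains x where "{u, x} \<in> F" "x \<noteq> z"
proof -
  obtain f1 f2 where f: "f1 \<in> F" "f2 \<in> F" "u \<in> f1" "u \<in> f2" "f1 \<noteq> f2"
    using assms(2) by (auto simp: numeral_2_eq_2 card_le_Suc_iff)
  then obtain x1 x2 where "f1 = {u, x1}" "f2 = {u, x2}"
    using simple_graph_edge_otherE[OF assms(1)] by metis
  with f that show ?thesis by blast
qed

lemma min_degree_two_imp_cycle: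
  assumes simple: "simple_graph S F" and "S \<noteq> {}"
    and degree: "\<And>v. v \<in> S \<Longrightarrow> 2 \<le> card {f \<in> F. v \<in> f}"
  shows "\<exists>xs. is_cycle F xs"
proof -
  have "finite S" using simple by (simp add: simple_graph_def)
  obtain s where "s \<in> S" using \<open>S \<noteq> {}\<close> by blast
  then obtain p where p: "distinct p" "set p \<subseteq> S" "is_walk F p"
    and closed: "\<And>x. x \<in> S \<Longrightarrow> {last p, x} \<in> F \<Longrightarrow> x \<in> set p"
    using ex_maximal_path[OF \<open>finite S\<close>] by metis
  define n where "n = length p"
  have "p \<noteq> []" using p(3) by (simp add: is_walk_def)
  then have last_p: "last p = p ! (n - 1)" "last p \<in> S"
    using p(2) by (auto simp: n_def last_conv_nth)
  \<comment> \<open>A second neighbour of the endpoint avoids its predecessor on the path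
    (for a one-vertex path, \<open>p ! (n - 2)\<close> is the endpoint itself).\<close>
  obtain x where x: "{last p, x} \<in> F" "x \<noteq> p ! (n - 2)"
    using ex_neighbour_avoiding[OF simple degree[OF last_p(2)]] by blast
  have "x \<noteq> last p" "x \<in> S"
    using simple_graph_edgeD[OF simple x(1)] by auto
  then obtain j where j: "j < n" "p ! j = x"
    using closed[OF _ x(1)] by (auto simp: in_set_conv_nth n_def)
  have "j + 3 \<le> n"
    using j x(2) \<open>x \<noteq> last p\<close> last_p(1) by (cases "j = n - 1 \<or> j = n - 2") auto
  then have "is_cycle F (drop j p)"
    using is_cycle_drop[OF p(1,3)] x(1) j by (simp add: n_def)
  then show ?thesis by blast
qed

lemma acyclic_card_edges_le:
  assumes "simple_graph S F" "\<not> (\<exists>xs. is_cycle F xs)"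
  shows "card F \<le> card S"
  using assms
proof (induction "card S" arbitrary: S F)
  case 0
  then have "S = {}" by (simp add: simple_graph_def)
  then show ?case using "0.prems"(1) by (auto simp: simple_graph_def)
next
  case (Suc n)
  then have "finite S" "S \<noteq> {}" by (auto simp: simple_graph_def)
  have "\<not> (\<forall>v\<in>S. 2 \<le> card {f \<in> F. v \<in> f})"
    using min_degree_two_imp_cycle[OF Suc.prems(1) \<open>S \<noteq> {}\<close>] Suc.prems(2) by blast
  then obtain v where v: "v \<in> S" "card {f \<in> F. v \<in> f} \<le> 1" by force
  let ?F' = "{f \<in> F. v \<notin> f}"
  have "simple_graph (S - {v}) ?F'"
    using Suc.prems(1) unfolding simple_graph_def
    by (metis (lifting) Diff_iff finite_Diff insertCI mem_Collect_eq singletonD)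
  moreover have "\<not> (\<exists>xs. is_cycle ?F' xs)"
    using Suc.prems(2) is_cycle_mono[of ?F' _ F] by blast
  ultimately have "card ?F' \<le> card (S - {v})"
    using Suc.hyps(1)[of "S - {v}"] Suc.hyps(2) v(1) by simp
  have "F = ?F' \<union> {f \<in> F. v \<in> f}" by blast
  then have "card F \<le> card ?F' + card {f \<in> F. v \<in> f}"
    by (metis card_Un_le)
  also have "\<dots> \<le> card (S - {v}) + 1" using \<open>card ?F' \<le> card (S - {v})\<close> v(2) by linarith
  finally show ?case using v(1) \<open>finite S\<close> Suc.hyps(2) by (simp add: card_Diff_singleton)
qed

lemma max_stretch_le_mono: "max_stretch_le E \<sigma> k \<Longrightarrow> k \<le> k' \<Longrightarrow> max_stretch_le E \<sigma> k'"
  unfolding max_stretch_le_def using order_trans by blast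

lemma outer_k_planar_mono: "outer_k_planar k V E \<Longrightarrow> k \<le> k' \<Longrightarrow> outer_k_planar k' V E"
  unfolding outer_k_planar_def using order_trans by blast

lemma bandwidth_attained:
  assumes "simple_graph V E"
  obtains \<sigma> where "linear_layout V \<sigma>" "max_stretch_le E \<sigma> (bandwidth V E)"
proof -
  obtain \<sigma> where \<sigma>: "bij_betw \<sigma> V {1..card V}"
    using assms finite_same_card_bij[of V "{1..card V}"] by (auto simp: simple_graph_def)
  have "max_stretch_le E \<sigma> (card V)"
    unfolding max_stretch_le_def
  proof (intro allI impI)
    fix u v assume "{u, v} \<in> E"
    then have "\<sigma> u \<in> {1..card V}" "\<sigma> v \<in> {1..card V}"
      using \<sigma> simple_graph_edgeD[OF assms] by (auto simp: bij_betw_def)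
    then show "nat \<bar>int (\<sigma> u) - int (\<sigma> v)\<bar> \<le> card V" by auto
  qed
  with \<sigma> have "\<exists>k \<sigma>. linear_layout V \<sigma> \<and> max_stretch_le E \<sigma> k"
    by (auto simp: linear_layout_def)
  then have "\<exists>\<sigma>. linear_layout V \<sigma> \<and> max_stretch_le E \<sigma> (bandwidth V E)"
    unfolding bandwidth_def by (rule LeastI_ex)
  with that show ?thesis by blast
qed

lemma edges_cross_orientedE:
  assumes "edges_cross \<pi> {x, y} f" "\<pi> x < \<pi> y"
  obtains c d where "f = {c, d}" "\<pi> c < \<pi> d"
    "\<pi> x < \<pi> c \<and> \<pi> c < \<pi> y \<and> \<pi> y < \<pi> d \<or> \<pi> c < \<pi> x \<and> \<pi> x < \<pi> d \<and> \<pi> d < \<pi> y"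
proof -
  obtain a a' c d where h: "{x, y} = {a, a'}" "f = {c, d}" "\<pi> a < \<pi> a'" "\<pi> c < \<pi> d"
    "\<pi> a < \<pi> c \<and> \<pi> c < \<pi> a' \<and> \<pi> a' < \<pi> d \<or> \<pi> c < \<pi> a \<and> \<pi> a < \<pi> d \<and> \<pi> d < \<pi> a'"
    using assms(1) unfolding edges_cross_def by blast
  then have "a = x \<and> a' = y" using assms(2) by (auto simp: doubleton_eq_iff)
  with h that show ?thesis by blast
qed

locale apex_layout =
  fixes V :: "'a set" and E :: "'a set set" and w :: 'a and \<sigma> :: "'a \<Rightarrow> nat" and b :: nat
  assumes simple: "simple_graph V E"
    and acyclic: "\<not> (\<exists>xs. is_cycle E xs)"
    and apex_fresh: "w \<notin> V"
    and layout: "linear_layout V \<sigma>"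
    and stretch: "max_stretch_le E \<sigma> b"
    and b_pos: "1 \<le> b"
begin

definition drawing :: "'a \<Rightarrow> nat" where
  "drawing v = (if v = w then 1 else Suc (\<sigma> v))"

definition window :: "int \<Rightarrow> int \<Rightarrow> 'a set" where
  "window lo hi = {u \<in> V. lo < int (\<sigma> u) \<and> int (\<sigma> u) < hi}"

lemma finite_V: "finite V"
  using simple by (simp add: simple_graph_def)

lemma finite_E: "finite E"
proof -
  have "E \<subseteq> Pow V" using simple by (auto simp: simple_graph_def)
  then show ?thesis using finite_V finite_subset by blast
qed

lemma inj_on_layout: "inj_on \<sigma> V"
  using layout by (simp add: linear_layout_def bij_betw_def)

lemma layout_range: "v \<in> V \<Longrightarrow> 1 \<le> \<sigma> v \<and> \<sigma> v \<le> card V"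
  using layout by (auto simp: linear_layout_def bij_betw_def)

lemma edge_stretch: "{c, d} \<in> E \<Longrightarrow> int (\<sigma> d) \<le> int (\<sigma> c) + int b"
  using stretch by (fastforce simp: max_stretch_le_def insert_commute)

lemma edge_orientedE:
  assumes "e \<in> E"
  obtains x y where "e = {x, y}" "{x, y} \<in> E" "\<sigma> x < \<sigma> y"
proof -
  obtain x y where xy: "e = {x, y}" "x \<in> V" "y \<in> V" "x \<noteq> y"
    using simple assms by (rule simple_graph_edgeE)
  then have "\<sigma> x \<noteq> \<sigma> y" using inj_on_layout by (auto dest: inj_onD)
  then show ?thesis
    using that[of x y] that[of y x] xy assms by (metis insert_commute linorder_neqE_nat)
qed

lemma drawing_apex: "drawing w = 1"
  by (simp add: drawing_def)

lemma drawing_V: "v \<in> V \<Longrightarrow> drawing v = Suc (\<sigma> v)"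
  using apex_fresh by (auto simp: drawing_def)

lemma drawing_nonzero [simp]: "drawing v \<noteq> 0"
  by (simp add: drawing_def)

lemma drawing_apex_less: "v \<in> V \<Longrightarrow> drawing w < drawing v"
  using layout_range[of v] by (simp add: drawing_apex drawing_V)

lemma drawing_circular: "circular_drawing (insert w V) drawing"
proof -
  have "inj_on drawing V" using inj_on_layout by (auto simp: inj_on_def drawing_V)
  moreover have "drawing w \<notin> drawing ` V" by (auto simp: drawing_apex drawing_V dest: layout_range)
  ultimately have "inj_on drawing (insert w V)" using apex_fresh by simp
  moreover have "drawing ` V = Suc ` \<sigma> ` V" by (auto simp: image_def drawing_V)
  then have "drawing ` V = {2..Suc (card V)}"
    using layout by (simp add: linear_layout_def bij_betw_def)
  then have "drawing ` insert w V = {1..card (insert w V)}"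
    using finite_V apex_fresh by (auto simp: drawing_apex)
  ultimately show ?thesis by (simp add: circular_drawing_def bij_betw_def)
qed

lemma card_window_diff:
  assumes "X \<subseteq> window lo hi"
  shows "card (window lo hi - X) \<le> nat (hi - lo - 1) - card X"
proof -
  have "inj_on (\<lambda>u. int (\<sigma> u)) (window lo hi)"
    using inj_on_layout by (auto simp: inj_on_def window_def)
  moreover have "(\<lambda>u. int (\<sigma> u)) ` window lo hi \<subseteq> {lo<..<hi}"
    by (auto simp: window_def)
  ultimately have "card (window lo hi) \<le> card {lo<..<hi}"
    using card_inj_on_le by blast
  then have "card (window lo hi) \<le> nat (hi - lo - 1)" by simp
  moreover have "X \<subseteq> V" using assms by (auto simp: window_def)
  then have "finite X" using finite_V finite_subset by blast
  ultimately show ?thesis using assms by (simp add: card_Diff_subset diff_le_mono)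
qed

lemma card_edges_within:
  assumes "S \<subseteq> V"
  shows "card {f \<in> E. f \<subseteq> S} \<le> card S"
proof (rule acyclic_card_edges_le)
  show "simple_graph S {f \<in> E. f \<subseteq> S}"
    unfolding simple_graph_def
  proof (intro conjI ballI)
    show "finite S" using finite_subset[OF assms finite_V] .
    fix e assume "e \<in> {f \<in> E. f \<subseteq> S}"
    then show "\<exists>u v. e = {u, v} \<and> u \<in> S \<and> v \<in> S \<and> u \<noteq> v"
      by (auto elim!: simple_graph_edgeE[OF simple])
  qed
  show "\<not> (\<exists>xs. is_cycle {f \<in> E. f \<subseteq> S} xs)"
    using acyclic is_cycle_mono[of "{f \<in> E. f \<subseteq> S}" _ E] by blast
qed

lemma apex_edge_crossings_subset:
  assumes "v \<in> V"
  shows "{f \<in> apex_edges w V E. edges_cross drawing {w, v} f}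
    \<subseteq> {f \<in> E. f \<subseteq> window (int (\<sigma> v) - int b) (int (\<sigma> v) + int b) - {v}}"
proof
  fix f assume "f \<in> {f \<in> apex_edges w V E. edges_cross drawing {w, v} f}"
  then have f: "f \<in> apex_edges w V E" "edges_cross drawing {w, v} f" by auto
  from f(2) drawing_apex_less[OF assms] obtain c d where cd: "f = {c, d}" "drawing w < drawing c"
    "drawing c < drawing v" "drawing v < drawing d"
    by (elim edges_cross_orientedE) (auto simp: drawing_apex)
  then have "w \<notin> f" by auto
  then have "f \<in> E" using f(1) by (auto simp: apex_edges_def)
  then have "c \<in> V" "d \<in> V" using cd(1) simple_graph_edgeD[OF simple] by auto
  then have "\<sigma> c < \<sigma> v" "\<sigma> v < \<sigma> d" using cd assms by (auto simp: drawing_V)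
  moreover have "int (\<sigma> d) \<le> int (\<sigma> c) + int b" using edge_stretch \<open>f \<in> E\<close> cd(1) by blast
  ultimately have "f \<subseteq> window (int (\<sigma> v) - int b) (int (\<sigma> v) + int b) - {v}"
    using cd(1) \<open>c \<in> V\<close> \<open>d \<in> V\<close> by (auto simp: window_def)
  with \<open>f \<in> E\<close> show "f \<in> {f \<in> E. f \<subseteq> window (int (\<sigma> v) - int b) (int (\<sigma> v) + int b) - {v}}"
    by blast
qed

lemma apex_edge_crossings:
  assumes "v \<in> V"
  shows "card {f \<in> apex_edges w V E. edges_cross drawing {w, v} f} \<le> 2 * b - 2"
proof -
  let ?S = "window (int (\<sigma> v) - int b) (int (\<sigma> v) + int b) - {v}"
  have "{v} \<subseteq> window (int (\<sigma> v) - int b) (int (\<sigma> v) + int b)"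
    using assms b_pos by (simp add: window_def)
  from card_window_diff[OF this] have "card ?S \<le> nat (2 * int b - 1) - 1"
    by (simp add: algebra_simps)
  then have "card ?S \<le> 2 * b - 2" by linarith
  have "?S \<subseteq> V" by (auto simp: window_def)
  have "finite {f \<in> E. f \<subseteq> ?S}" using finite_E by simp
  then have "card {f \<in> apex_edges w V E. edges_cross drawing {w, v} f} \<le> card {f \<in> E. f \<subseteq> ?S}"
    using apex_edge_crossings_subset[OF assms] by (rule card_mono)
  also have "\<dots> \<le> card ?S" using card_edges_within[OF \<open>?S \<subseteq> V\<close>] .
  finally show ?thesis using \<open>card ?S \<le> 2 * b - 2\<close> by linarith
qed

lemma tree_edge_crossings_subset:
  assumes "{x, y} \<in> E" "\<sigma> x < \<sigma> y"
  shows "{f \<in> apex_edges w V E. edges_cross drawing {x, y} f}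
    \<subseteq> {f \<in> E. f \<subseteq> window (int (\<sigma> x) - int b) (int (\<sigma> y) + int b) - {x, y}}
      \<union> (\<lambda>u. {w, u}) ` window (int (\<sigma> x)) (int (\<sigma> y))"
proof
  fix f assume "f \<in> {f \<in> apex_edges w V E. edges_cross drawing {x, y} f}"
  then have f: "f \<in> apex_edges w V E" "edges_cross drawing {x, y} f" by auto
  have "x \<in> V" "y \<in> V" using simple_graph_edgeD[OF simple assms(1)] by auto
  then have "drawing x < drawing y" using assms(2) by (simp add: drawing_V)
  with f(2) obtain c d where cd: "f = {c, d}" "drawing c < drawing d" and between:
    "drawing x < drawing c \<and> drawing c < drawing y \<and> drawing y < drawing d
     \<or> drawing c < drawing x \<and> drawing x < drawing d \<and> drawing d < drawing y"
    by (rule edges_cross_orientedE)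
  have "int (\<sigma> y) \<le> int (\<sigma> x) + int b" using edge_stretch[OF assms(1)] .
  consider (tree) "f \<in> E" | (apex) u where "u \<in> V" "f = {w, u}"
    using f(1) by (auto simp: apex_edges_def)
  then show "f \<in> {f \<in> E. f \<subseteq> window (int (\<sigma> x) - int b) (int (\<sigma> y) + int b) - {x, y}}
      \<union> (\<lambda>u. {w, u}) ` window (int (\<sigma> x)) (int (\<sigma> y))"
  proof cases
    case tree
    then have "c \<in> V" "d \<in> V" using cd(1) simple_graph_edgeD[OF simple] by auto
    then have "\<sigma> x < \<sigma> c \<and> \<sigma> c < \<sigma> y \<and> \<sigma> y < \<sigma> d \<or> \<sigma> c < \<sigma> x \<and> \<sigma> x < \<sigma> d \<and> \<sigma> d < \<sigma> y"
      using between \<open>x \<in> V\<close> \<open>y \<in> V\<close> by (simp add: drawing_V)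
    moreover have "int (\<sigma> d) \<le> int (\<sigma> c) + int b" using edge_stretch tree cd(1) by blast
    ultimately have "f \<subseteq> window (int (\<sigma> x) - int b) (int (\<sigma> y) + int b) - {x, y}"
      using cd(1) \<open>c \<in> V\<close> \<open>d \<in> V\<close> \<open>int (\<sigma> y) \<le> int (\<sigma> x) + int b\<close>
      by (auto simp: window_def)
    with tree show ?thesis by blast
  next
    case (apex u)
    \<comment> \<open>\<open>w\<close> is drawn first, so it is the left end \<open>c\<close> and only the second pattern can occur.\<close>
    have "d \<noteq> w" using cd(2) by (auto simp: drawing_apex)
    then have "c = w" "d = u" using cd(1) apex(2) by (auto simp: doubleton_eq_iff)
    then have "drawing x < drawing u" "drawing u < drawing y"
      using between drawing_apex_less[OF \<open>x \<in> V\<close>] by auto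
    then have "u \<in> window (int (\<sigma> x)) (int (\<sigma> y))"
      using apex(1) \<open>x \<in> V\<close> \<open>y \<in> V\<close> by (simp add: drawing_V window_def)
    with apex(2) show ?thesis by blast
  qed
qed

lemma tree_edge_crossings:
  assumes "{x, y} \<in> E" "\<sigma> x < \<sigma> y"
  shows "card {f \<in> apex_edges w V E. edges_cross drawing {x, y} f} \<le> 4 * b - 4"
proof -
  let ?S = "window (int (\<sigma> x) - int b) (int (\<sigma> y) + int b) - {x, y}"
  let ?M = "window (int (\<sigma> x)) (int (\<sigma> y))"
  have "x \<in> V" "y \<in> V" "x \<noteq> y" using simple_graph_edgeD[OF simple assms(1)] by auto
  have "int (\<sigma> y) \<le> int (\<sigma> x) + int b" using edge_stretch[OF assms(1)] .
  have "{x, y} \<subseteq> window (int (\<sigma> x) - int b) (int (\<sigma> y) + int b)"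
    using \<open>x \<in> V\<close> \<open>y \<in> V\<close> assms(2) b_pos by (auto simp: window_def)
  from card_window_diff[OF this] have "card ?S \<le> 3 * b - 3"
    using \<open>x \<noteq> y\<close> \<open>int (\<sigma> y) \<le> int (\<sigma> x) + int b\<close> by simp
  have "card ?M \<le> b - 1"
    using card_window_diff[of "{}" "int (\<sigma> x)" "int (\<sigma> y)"]
      \<open>int (\<sigma> y) \<le> int (\<sigma> x) + int b\<close> by simp
  have "?S \<subseteq> V" by (auto simp: window_def)
  have "finite ?M" using finite_V by (simp add: window_def)
  then have "card {f \<in> apex_edges w V E. edges_cross drawing {x, y} f}
      \<le> card ({f \<in> E. f \<subseteq> ?S} \<union> (\<lambda>u. {w, u}) ` ?M)"
    using finite_E tree_edge_crossings_subset[OF assms] by (intro card_mono) auto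
  also have "\<dots> \<le> card {f \<in> E. f \<subseteq> ?S} + card ((\<lambda>u. {w, u}) ` ?M)"
    by (rule card_Un_le)
  also have "\<dots> \<le> card ?S + card ?M"
    using card_edges_within[OF \<open>?S \<subseteq> V\<close>] card_image_le[OF \<open>finite ?M\<close>] by (rule add_mono)
  finally show ?thesis using \<open>card ?S \<le> 3 * b - 3\<close> \<open>card ?M \<le> b - 1\<close> by linarith
qed

lemma card_crossings_le:
  assumes "e \<in> apex_edges w V E"
  shows "card {f \<in> apex_edges w V E. edges_cross drawing e f} \<le> 4 * b - 4"
proof -
  consider (apex) v where "v \<in> V" "e = {w, v}" | (tree) "e \<in> E"
    using assms by (auto simp: apex_edges_def)
  then show ?thesis
  proof cases
    case apex
    show ?thesis unfolding apex(2) using apex_edge_crossings[OF apex(1)] by linarith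
  next
    case tree
    then obtain x y where "e = {x, y}" "{x, y} \<in> E" "\<sigma> x < \<sigma> y" by (rule edge_orientedE)
    then show ?thesis using tree_edge_crossings by simp
  qed
qed

lemma outer_k_planar_apex: "outer_k_planar (4 * b - 4) (insert w V) (apex_edges w V E)"
  unfolding outer_k_planar_def using drawing_circular card_crossings_le by blast

end

theorem lemma5p7:
  fixes V :: "'a set" and E :: "'a set set" and w :: 'a and b :: nat
  assumes "is_tree V E"
    and "w \<notin> V"
    and "b \<ge> 1"
    and "bandwidth V E \<le> b"
  shows "outer_k_planar (5 * b - 5) (insert w V) (apex_edges w V E)"
proof -
  have simple: "simple_graph V E" and acyclic: "\<not> (\<exists>xs. is_cycle E xs)"
    using assms(1) by (auto simp: is_tree_def)
  obtain \<sigma> where "linear_layout V \<sigma>" "max_stretch_le E \<sigma> (bandwidth V E)"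
    using bandwidth_attained[OF simple] .
  then interpret apex_layout V E w \<sigma> b
    using simple acyclic assms(2-4) max_stretch_le_mono by unfold_locales blast+
  show ?thesis by (rule outer_k_planar_mono[OF outer_k_planar_apex]) linarith
qed

end
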